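(* Let $\psi_1,\psi_2:(0,1]\to(0,\infty)$ each satisfy $\psi_i(1)=1$ and $\lim_{r\to0+}\psi_i(r)=0$, with $I_{\psi_1},I_{\psi_2}\subset(0,1)\cup(1,2)\cup(2,3)$ and $M_{\psi_1}<m_{\psi_2}$. Then for every $0<\varepsilon<1$ there exists $C=C(d,\psi_1,\psi_2,\varepsilon)>0$ such that for all $f\in C^{\psi_2}(\mathbb{R}^d)$, $$\|f\|_{C^{\psi_1}}\le C\|f\|_{C^0}+\varepsilon\|f\|_{C^{\psi_2}}.$$
   Context: A function $g:(0,1]\to(0,\infty)$ is almost increasing if there is $c\in(0,1]$ with $c\,g(r)\le g(R)$ for $0<r\le R\le1$, almost decreasing if there is $C\ge1$ with $g(R)\le Cg(r)$ for $0<r\le R\le1$. $M_g=\inf\{\alpha: g(r)/r^\alpha\text{ almost decreasing on }(0,1]\}$, $m_g=\sup\{\alpha: g(r)/r^\alpha\text{ almost increasing on }(0,1]\}$, $I_g=[m_g,M_g]$. $\|f\|_{C^0}=\sup|f|$; $\|D^jf\|_{C^0}=\max_{|\gamma|=j}\|D^\gamma f\|_{C^0}$. For $j\in\mathbb{N}_0$, $[f]_{C^{-j;g}}=\sup_{x}\sup_{0<|h|\le1}\frac{|f(x+h)-f(x)|}{g(|h|)|h|^{-j}}$, $[D^kf]_{C^{-k;g}}=\max_{|\gamma|=k}[D^\gamma f]_{C^{-k;g}}$. If $m_g\in(k,k+1]$, $k\in\mathbb{N}_0$, $C^g(\mathbb{R}^d)$ is the set of continuous $f$ with all $D^\gamma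 f$, $|\gamma|\le k$, bounded continuous and $[D^\gamma f]_{C^{-k;g}}<\infty$ for $|\gamma|=k$, with norm $\|f\|_{C^g}=\sum_{j=0}^k\|D^jf\|_{C^0}+[D^kf]_{C^{-k;g}}$. *)

theory Defs
  imports "HOL-Analysis.Analysis"
begin

definition almost_increasing :: "(real \<Rightarrow> real) \<Rightarrow> bool" where
  "almost_increasing g \<longleftrightarrow>
     (\<exists>c. 0 < c \<and> c \<le> 1 \<and> (\<forall>r R. 0 < r \<and> r \<le> R \<and> R \<le> 1 \<longrightarrow> c * g r \<le> g R))"

definition almost_decreasing :: "(real \<Rightarrow> real) \<Rightarrow> bool" where
  "almost_decreasing g \<longleftrightarrow>
     (\<exists>C. 1 \<le> C \<and> (\<forall>r R. 0 < r \<and> r \<le> R \<and> R \<le> 1 \<longrightarrow> g R \<le> C * g r))"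

text \<open>Upper and lower indices, valued in the extended reals (inf of empty set = +infinity).\<close>
definition upper_index :: "(real \<Rightarrow> real) \<Rightarrow> ereal" where
  "upper_index g = Inf (ereal ` {\<alpha>. almost_decreasing (\<lambda>r. g r / r powr \<alpha>)})"

definition lower_index :: "(real \<Rightarrow> real) \<Rightarrow> ereal" where
  "lower_index g = Sup (ereal ` {\<alpha>. almost_increasing (\<lambda>r. g r / r powr \<alpha>)})"

definition index_interval :: "(real \<Rightarrow> real) \<Rightarrow> real set" where
  "index_interval g = {x. lower_index g \<le> ereal x \<and> ereal x \<le> upper_index g}"

definition partial_dir :: "'a::real_normed_vector \<Rightarrow> ('a \<Rightarrow> real) \<Rightarrow> 'a \<Rightarrow> real" where
  "partial_dir i f x = deriv (\<lambda>t. f (x + t *\<^sub>R i)) 0"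

fun dpart :: "'a::real_normed_vector list \<Rightarrow> ('a \<Rightarrow> real) \<Rightarrow> 'a \<Rightarrow> real" where
  "dpart [] f = f"
| "dpart (i # is) f = partial_dir i (dpart is f)"

definition multi_idx :: "nat \<Rightarrow> (real^'n) list set" where
  "multi_idx j = {is. set is \<subseteq> Basis \<and> length is = j}"

definition sup0 :: "(real^'n \<Rightarrow> real) \<Rightarrow> real" where
  "sup0 f = (SUP x. \<bar>f x\<bar>)"

definition normD :: "nat \<Rightarrow> (real^'n \<Rightarrow> real) \<Rightarrow> real" where
  "normD j f = (SUP is \<in> multi_idx j. sup0 (dpart is f))"

definition holder_quot :: "nat \<Rightarrow> (real \<Rightarrow> real) \<Rightarrow> (real^'n \<Rightarrow> real) \<Rightarrow> real set" where
  "holder_quot j g f = {\<bar>f (x + h) - f x\<bar> / (g (norm h) * norm h powr (- real j)) | x h.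
                         0 < norm h \<and> norm h \<le> 1}"

definition holder_semi :: "nat \<Rightarrow> (real \<Rightarrow> real) \<Rightarrow> (real^'n \<Rightarrow> real) \<Rightarrow> real" where
  "holder_semi j g f = Sup (holder_quot j g f)"

definition holder_semiD :: "nat \<Rightarrow> (real \<Rightarrow> real) \<Rightarrow> (real^'n \<Rightarrow> real) \<Rightarrow> real" where
  "holder_semiD k g f = (SUP is \<in> multi_idx k. holder_semi k g (dpart is f))"

text \<open>The integer k with m_g in (k, k+1] (meaningful when m_g is a positive real).\<close>
definition horder :: "(real \<Rightarrow> real) \<Rightarrow> nat" where
  "horder g = nat (\<lceil>real_of_ereal (lower_index g)\<rceil> - 1)"

definition in_Cg :: "(real \<Rightarrow> real) \<Rightarrow> (real^'n \<Rightarrow> real) \<Rightarrow> bool" where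
  "in_Cg g f \<longleftrightarrow>
     (let k = horder g in
       (\<forall>is \<in> {is. set is \<subseteq> Basis \<and> length is < k}. \<forall>i \<in> Basis. \<forall>x.
           (\<lambda>t. dpart is f (x + t *\<^sub>R i)) field_differentiable (at (0::real))) \<and>
       (\<forall>is \<in> {is. set is \<subseteq> Basis \<and> length is \<le> k}.
           continuous_on UNIV (dpart is f) \<and> bounded (range (dpart is f))) \<and>
       (\<forall>is \<in> multi_idx k. bdd_above (holder_quot k g (dpart is f))))"

definition Cg_norm :: "(real \<Rightarrow> real) \<Rightarrow> (real^'n \<Rightarrow> real) \<Rightarrow> real" where
  "Cg_norm g f = (\<Sum>j\<le>horder g. normD j f) + holder_semiD (horder g) g f"

end

theory Submission
  imports Defs
begin

text \<open>Each term of the C^psi1 norm is bounded by C_delta ||f||_0 + delta ||f||_{C^psi2} for every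
  delta > 0. Since the index intervals avoid the integers, there are exponents
  M_psi1 <= beta < alpha < m_psi2 with r^beta <= C psi1(r), c psi2(r) <= r^alpha, beta <= k + 1 and
  alpha > K, where k and K are the orders of C^psi1 and C^psi2. Landau's inequality along a
  coordinate bounds ||D^(j+1) f|| by 2 ||D^j f|| / t plus the oscillation of D^(j+1) f over distance
  t, which is O(t + t^(alpha - K)) ||f||_{C^psi2}; induction on j handles all orders up to K.
  The psi1-seminorm of D^k f is bounded by ||D^(k+1) f|| if k < K, because r <= C psi1(r) r^(-k).
  If k = K, increments shorter than a radius below which psi2 <= delta psi1 are absorbed by
  delta ||f||_{C^psi2}, and longer ones by a multiple of ||D^k f||.\<close>

section \<open>Multi-indices, sup norms and Hoelder seminorms\<close>

lemma finite_multi_idx: "finite (multi_idx j :: (real^'n) list set)"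
  unfolding multi_idx_def by (rule finite_lists_length_eq) simp

lemma multi_idx_nonempty: "multi_idx j \<noteq> ({} :: (real^'n) list set)"
proof -
  obtain b :: "real^'n" where "b \<in> Basis" using nonempty_Basis by blast
  then have "replicate j b \<in> multi_idx j" unfolding multi_idx_def by auto
  then show ?thesis by blast
qed

lemma multi_idx_0: "multi_idx 0 = {[]}"
  unfolding multi_idx_def by auto

lemma Cons_in_multi_idx: "e \<in> Basis \<Longrightarrow> is \<in> multi_idx j \<Longrightarrow> e # is \<in> multi_idx (Suc j)"
  unfolding multi_idx_def by auto

lemma multi_idx_SucE:
  assumes "is \<in> multi_idx (Suc j)"
  obtains e js where "is = e # js" "e \<in> Basis" "js \<in> multi_idx j"
  using assms unfolding multi_idx_def by (cases "is") auto

lemma abs_le_sup0: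
  fixes g :: "real^'n \<Rightarrow> real"
  assumes "bounded (range g)" shows "\<bar>g y\<bar> \<le> sup0 g"
proof -
  obtain a where "\<forall>x\<in>range g. norm x \<le> a" using assms bounded_iff by blast
  then have "bdd_above (range (\<lambda>x. \<bar>g x\<bar>))" by (auto intro!: bdd_aboveI2[where M=a])
  then show ?thesis unfolding sup0_def by (rule cSUP_upper[OF UNIV_I])
qed

lemma sup0_le:
  fixes g :: "real^'n \<Rightarrow> real"
  assumes "\<And>y. \<bar>g y\<bar> \<le> B" shows "sup0 g \<le> B"
  unfolding sup0_def by (rule cSUP_least) (auto intro: assms)

lemma sup0_const: "sup0 (\<lambda>_::real^'n. a) = \<bar>a\<bar>"
  unfolding sup0_def by simp

lemma sup0_dpart_le_normD:
  fixes f :: "real^'n \<Rightarrow> real"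
  assumes "is \<in> multi_idx j" shows "sup0 (dpart is f) \<le> normD j f"
  unfolding normD_def
  by (rule cSUP_upper[OF assms]) (intro bdd_above_finite finite_imageI finite_multi_idx)

lemma normD_le:
  fixes f :: "real^'n \<Rightarrow> real"
  assumes "\<And>is. is \<in> multi_idx j \<Longrightarrow> sup0 (dpart is f) \<le> B" shows "normD j f \<le> B"
  unfolding normD_def by (rule cSUP_least[OF multi_idx_nonempty assms])

lemma normD_0: "normD 0 = (sup0 :: (real^'n \<Rightarrow> real) \<Rightarrow> real)"
  unfolding normD_def multi_idx_0 by (simp add: fun_eq_iff)

lemma holder_quot_nonempty: "holder_quot j g (f :: real^'n \<Rightarrow> real) \<noteq> {}"
proof -
  obtain b :: "real^'n" where "b \<in> Basis" using nonempty_Basis by blast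
  then have "norm b = 1" by simp
  then have "\<bar>f (0 + b) - f 0\<bar> / (g (norm b) * norm b powr (- real j)) \<in> holder_quot j g f"
    unfolding holder_quot_def by fastforce
  then show ?thesis by blast
qed

lemma holder_quot_le_holder_semi:
  fixes f :: "real^'n \<Rightarrow> real"
  assumes "bdd_above (holder_quot j g f)" "0 < norm h" "norm h \<le> 1"
  shows "\<bar>f (x + h) - f x\<bar> / (g (norm h) * norm h powr (- real j)) \<le> holder_semi j g f"
  unfolding holder_semi_def
  by (rule cSup_upper[OF _ assms(1)]) (use assms in \<open>auto simp: holder_quot_def\<close>)

lemma holder_semi_le_holder_semiD:
  fixes f :: "real^'n \<Rightarrow> real"
  assumes "is \<in> multi_idx k" shows "holder_semi k g (dpart is f) \<le> holder_semiD k g f"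
  unfolding holder_semiD_def
  by (rule cSUP_upper[OF assms]) (intro bdd_above_finite finite_imageI finite_multi_idx)

lemma holder_semiD_le:
  fixes f :: "real^'n \<Rightarrow> real"
  assumes pos: "\<And>r. 0 < r \<Longrightarrow> r \<le> 1 \<Longrightarrow> 0 < g r"
    and incr: "\<And>is x h. is \<in> multi_idx k \<Longrightarrow> 0 < norm h \<Longrightarrow> norm h \<le> 1 \<Longrightarrow>
      \<bar>dpart is f (x + h) - dpart is f x\<bar> \<le> B * (g (norm h) * norm h powr (- real k))"
  shows "holder_semiD k g f \<le> B"
  unfolding holder_semiD_def
proof (rule cSUP_least[OF multi_idx_nonempty])
  fix "is" :: "(real^'n) list" assume "is": "is \<in> multi_idx k"
  show "holder_semi k g (dpart is f) \<le> B"
    unfolding holder_semi_def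
  proof (rule cSup_least[OF holder_quot_nonempty])
    fix q assume "q \<in> holder_quot k g (dpart is f)"
    then obtain x h where "0 < norm h" "norm h \<le> 1"
      and "q = \<bar>dpart is f (x + h) - dpart is f x\<bar> / (g (norm h) * norm h powr (- real k))"
      unfolding holder_quot_def by blast
    then show "q \<le> B" using incr[OF "is"] pos by (simp add: divide_le_eq)
  qed
qed

lemma partial_dir_const: "partial_dir i (\<lambda>_. a) = (\<lambda>_. (0::real))"
  unfolding partial_dir_def by (rule ext) (simp add: DERIV_imp_deriv)

lemma dpart_const: "is \<noteq> [] \<Longrightarrow> dpart is (\<lambda>_. a) = (\<lambda>_. (0::real))"
proof (induction "is")
  case (Cons i js) then show ?case by (cases "js = []") (auto simp: partial_dir_const)
qed simp

lemma Cg_norm_const: "Cg_norm g (\<lambda>_::real^'n. a) = \<bar>a\<bar>"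
proof -
  have normD: "normD j (\<lambda>_::real^'n. a) = (if j = 0 then \<bar>a\<bar> else 0)" for j
  proof (cases "j = 0")
    case False
    then have "\<And>is. is \<in> multi_idx j \<Longrightarrow> sup0 (dpart is (\<lambda>_::real^'n. a)) = 0"
      by (auto simp: multi_idx_def dpart_const sup0_const)
    then have "normD j (\<lambda>_::real^'n. a) = (SUP is\<in>(multi_idx j :: (real^'n) list set). 0)"
      unfolding normD_def by (rule SUP_cong[OF refl])
    then show ?thesis using False multi_idx_nonempty[of j, where 'n='n] by simp
  qed (simp add: normD_0 sup0_const)
  have "holder_quot k g (dpart is (\<lambda>_::real^'n. a)) = {0}" for k "is"
    using holder_quot_nonempty[of k g "dpart is (\<lambda>_::real^'n. a)"]
    by (cases "is = []") (auto simp: holder_quot_def dpart_const)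
  then have "holder_semiD k g (\<lambda>_::real^'n. a) = 0" for k
    using multi_idx_nonempty[of k, where 'n='n] by (simp add: holder_semiD_def holder_semi_def)
  then show ?thesis unfolding Cg_norm_def normD by (simp add: sum.delta)
qed

lemma in_Cg_differentiable:
  fixes f :: "real^'n \<Rightarrow> real"
  assumes "in_Cg g f" "set is \<subseteq> Basis" "length is < horder g" "i \<in> Basis"
  shows "(\<lambda>t. dpart is f (x + t *\<^sub>R i)) field_differentiable (at (0::real))"
  using assms unfolding in_Cg_def Let_def by auto

lemma in_Cg_bounded:
  fixes f :: "real^'n \<Rightarrow> real"
  assumes "in_Cg g f" "is \<in> multi_idx j" "j \<le> horder g"
  shows "bounded (range (dpart is f))"
  using assms unfolding in_Cg_def Let_def multi_idx_def by auto

lemma in_Cg_bdd_above_holder_quot: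
  fixes f :: "real^'n \<Rightarrow> real"
  assumes "in_Cg g f" "is \<in> multi_idx (horder g)"
  shows "bdd_above (holder_quot (horder g) g (dpart is f))"
  using assms unfolding in_Cg_def Let_def by auto

lemma abs_dpart_le_normD:
  fixes f :: "real^'n \<Rightarrow> real"
  assumes "in_Cg g f" "is \<in> multi_idx j" "j \<le> horder g"
  shows "\<bar>dpart is f y\<bar> \<le> normD j f"
  using order_trans[OF abs_le_sup0[OF in_Cg_bounded[OF assms]] sup0_dpart_le_normD[OF assms(2)]] .

lemma dpart_increment_le_normD:
  fixes f :: "real^'n \<Rightarrow> real"
  assumes "in_Cg g f" "is \<in> multi_idx j" "j \<le> horder g"
  shows "\<bar>dpart is f (x + h) - dpart is f x\<bar> \<le> 2 * normD j f"
  using abs_dpart_le_normD[OF assms, of "x + h"] abs_dpart_le_normD[OF assms, of x]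
    abs_triangle_ineq4[of "dpart is f (x + h)" "dpart is f x"]
  by linarith

lemma normD_nonneg:
  fixes f :: "real^'n \<Rightarrow> real"
  assumes "in_Cg g f" "j \<le> horder g" shows "0 \<le> normD j f"
proof -
  obtain "is" where "is \<in> (multi_idx j :: (real^'n) list set)" using multi_idx_nonempty by blast
  then show ?thesis using abs_dpart_le_normD[OF assms(1) _ assms(2), of "is" 0] by linarith
qed

lemma sup0_nonneg:
  fixes f :: "real^'n \<Rightarrow> real"
  assumes "in_Cg g f" shows "0 \<le> sup0 f"
  using normD_nonneg[OF assms, of 0] by (simp add: normD_0)

lemma dpart_increment_le_holder_semiD:
  fixes f :: "real^'n \<Rightarrow> real"
  assumes f: "in_Cg g f" and pos: "\<And>r. 0 < r \<Longrightarrow> r \<le> 1 \<Longrightarrow> 0 < g r"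
    and "is": "is \<in> multi_idx (horder g)" and h: "0 < norm h" "norm h \<le> 1"
  shows "\<bar>dpart is f (x + h) - dpart is f x\<bar>
           \<le> holder_semiD (horder g) g f * (g (norm h) * norm h powr (- real (horder g)))"
proof -
  have "\<bar>dpart is f (x + h) - dpart is f x\<bar> / (g (norm h) * norm h powr (- real (horder g)))
        \<le> holder_semi (horder g) g (dpart is f)"
    by (rule holder_quot_le_holder_semi[OF in_Cg_bdd_above_holder_quot[OF f "is"] h])
  also have "\<dots> \<le> holder_semiD (horder g) g f" by (rule holder_semi_le_holder_semiD[OF "is"])
  finally show ?thesis using pos[OF h] h by (simp add: divide_le_eq)
qed

lemma holder_semiD_nonneg:
  fixes f :: "real^'n \<Rightarrow> real"
  assumes f: "in_Cg g f" and pos: "\<And>r. 0 < r \<Longrightarrow> r \<le> 1 \<Longrightarrow> 0 < g r"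
  shows "0 \<le> holder_semiD (horder g) g f"
proof -
  obtain "is" where "is": "is \<in> (multi_idx (horder g) :: (real^'n) list set)"
    using multi_idx_nonempty by blast
  obtain b :: "real^'n" where "b \<in> Basis" using nonempty_Basis by blast
  then have "norm b = 1" by simp
  then have "0 \<le> holder_semiD (horder g) g f * g 1"
    using dpart_increment_le_holder_semiD[OF f pos "is", of b 0] by simp
  then show ?thesis using pos[of 1] by (simp add: zero_le_mult_iff)
qed

lemma normD_le_Cg_norm:
  fixes f :: "real^'n \<Rightarrow> real"
  assumes f: "in_Cg g f" and pos: "\<And>r. 0 < r \<Longrightarrow> r \<le> 1 \<Longrightarrow> 0 < g r" and j: "j \<le> horder g"
  shows "normD j f \<le> Cg_norm g f"
proof -
  have "normD j f \<le> (\<Sum>i\<le>horder g. normD i f)"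
    by (rule member_le_sum) (use j normD_nonneg[OF f] in auto)
  then show ?thesis unfolding Cg_norm_def using holder_semiD_nonneg[OF f pos] by linarith
qed

lemma holder_semiD_le_Cg_norm:
  fixes f :: "real^'n \<Rightarrow> real"
  assumes f: "in_Cg g f"
  shows "holder_semiD (horder g) g f \<le> Cg_norm g f"
  unfolding Cg_norm_def using sum_nonneg[of "{..horder g}" "\<lambda>i. normD i f"] normD_nonneg[OF f]
  by auto

lemma Cg_norm_nonneg:
  fixes f :: "real^'n \<Rightarrow> real"
  assumes f: "in_Cg g f" and pos: "\<And>r. 0 < r \<Longrightarrow> r \<le> 1 \<Longrightarrow> 0 < g r"
  shows "0 \<le> Cg_norm g f"
  using normD_le_Cg_norm[OF f pos, of 0] normD_nonneg[OF f, of 0] by simp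

section \<open>Almost monotone weights and their indices\<close>

lemma tendsto_powr_at_right_0:
  assumes "0 < p" shows "((\<lambda>t::real. t powr p) \<longlongrightarrow> 0) (at_right 0)"
  using eventually_at_right_less[of 0]
  by (intro tendsto_zero_powrI[OF tendsto_ident_at tendsto_const _ assms]) (auto elim: eventually_mono)

lemma exists_pos_le_1_less:
  fixes \<phi> :: "real \<Rightarrow> real"
  assumes "(\<phi> \<longlongrightarrow> 0) (at_right 0)" "0 < \<eta>"
  shows "\<exists>t::real. 0 < t \<and> t \<le> 1 \<and> \<phi> t < \<eta>"
proof -
  have "eventually (\<lambda>t. \<phi> t < \<eta>) (at_right 0)" by (rule order_tendstoD(2)[OF assms])
  moreover have "eventually (\<lambda>t. 0 < t \<and> t < 1) (at_right (0::real))"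
    unfolding eventually_at_right_field by (intro exI[of _ 1]) auto
  ultimately have "eventually (\<lambda>t. \<phi> t < \<eta> \<and> 0 < t \<and> t < 1) (at_right (0::real))"
    by eventually_elim auto
  then obtain t where "\<phi> t < \<eta> \<and> 0 < t \<and> t < 1"
    using eventually_happens'[OF trivial_limit_at_right_real] by blast
  then show ?thesis by auto
qed

lemma power_le_of_almost_decreasing:
  assumes "almost_decreasing (\<lambda>r. g r / r powr \<beta>)" "g 1 = 1"
  obtains C where "1 \<le> C" "\<And>r. 0 < r \<Longrightarrow> r \<le> 1 \<Longrightarrow> r powr \<beta> \<le> C * g r"
proof -
  obtain C where C: "1 \<le> C"
    "\<And>r R. 0 < r \<and> r \<le> R \<and> R \<le> 1 \<Longrightarrow> g R / R powr \<beta> \<le> C * (g r / r powr \<beta>)"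
    using assms(1) unfolding almost_decreasing_def by blast
  have "r powr \<beta> \<le> C * g r" if "0 < r" "r \<le> 1" for r
    using C(2)[of r 1] that assms(2) by (simp add: field_simps)
  with C(1) show ?thesis by (rule that)
qed

lemma le_power_of_almost_increasing:
  assumes "almost_increasing (\<lambda>r. g r / r powr \<alpha>)" "g 1 = 1"
  obtains c where "0 < c" "\<And>r. 0 < r \<Longrightarrow> r \<le> 1 \<Longrightarrow> c * g r \<le> r powr \<alpha>"
proof -
  obtain c where c: "0 < c"
    "\<And>r R. 0 < r \<and> r \<le> R \<and> R \<le> 1 \<Longrightarrow> c * (g r / r powr \<alpha>) \<le> g R / R powr \<alpha>"
    using assms(1) unfolding almost_increasing_def by blast
  have "c * g r \<le> r powr \<alpha>" if "0 < r" "r \<le> 1" for r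
    using c(2)[of r 1] that assms(2) by (simp add: field_simps)
  with c(1) show ?thesis by (rule that)
qed

lemma upper_index_neq_minf:
  assumes one: "g 1 = 1" and lim: "(g \<longlongrightarrow> 0) (at_right 0)"
  shows "upper_index g \<noteq> -\<infinity>"
proof
  assume "upper_index g = -\<infinity>"
  then have "Inf (ereal ` {\<beta>. almost_decreasing (\<lambda>r. g r / r powr \<beta>)}) < ereal 0"
    by (simp add: upper_index_def)
  then obtain \<beta> where \<beta>: "almost_decreasing (\<lambda>r. g r / r powr \<beta>)" "\<beta> < 0"
    by (auto simp: Inf_less_iff)
  obtain C where C: "1 \<le> C" "\<And>r. 0 < r \<Longrightarrow> r \<le> 1 \<Longrightarrow> r powr \<beta> \<le> C * g r"
    using power_le_of_almost_decreasing[OF \<beta>(1) one] by blast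
  have "1 / C \<le> g r" if "0 < r" "r \<le> 1" for r
  proof -
    have "r powr 0 \<le> r powr \<beta>" using that \<beta>(2) by (intro powr_mono') auto
    then have "1 \<le> C * g r" using C(2)[OF that] that by simp
    then show ?thesis using C(1) by (simp add: field_simps)
  qed
  moreover obtain r where "0 < r" "r \<le> 1" "g r < 1 / C"
    using exists_pos_le_1_less[OF lim, of "1 / C"] C(1) by auto
  ultimately show False by fastforce
qed

lemma lower_index_le_upper_index:
  assumes pos: "\<And>r. 0 < r \<Longrightarrow> r \<le> 1 \<Longrightarrow> 0 < g r"
  shows "lower_index g \<le> upper_index g"
proof -
  have "a \<le> b" if a: "almost_increasing (\<lambda>r. g r / r powr a)" and b: "almost_decreasing (\<lambda>r. g r / r powr b)"
    for a b
  proof (rule ccontr)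
    assume "\<not> a \<le> b"
    obtain c where c: "0 < c"
      "\<And>r R. 0 < r \<and> r \<le> R \<and> R \<le> 1 \<Longrightarrow> c * (g r / r powr a) \<le> g R / R powr a"
      using a unfolding almost_increasing_def by blast
    obtain C where C: "1 \<le> C"
      "\<And>r R. 0 < r \<and> r \<le> R \<and> R \<le> 1 \<Longrightarrow> g R / R powr b \<le> C * (g r / r powr b)"
      using b unfolding almost_decreasing_def by blast
    have "((\<lambda>r. r powr (a - b)) \<longlongrightarrow> 0) (at_right 0)"
      using \<open>\<not> a \<le> b\<close> by (intro tendsto_powr_at_right_0) simp
    moreover have "0 < c / C" using c C by simp
    ultimately obtain r where r: "0 < r" "r \<le> 1" "r powr (a - b) < c / C"
      using exists_pos_le_1_less by blast
    have "c * (g r / r powr a) \<le> C * (g r / r powr b)" using c(2)[of r 1] C(2)[of r 1] r by simp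
    then have "c * r powr b \<le> C * r powr a" using pos[OF r(1,2)] r by (simp add: field_simps)
    also have "\<dots> = (C * r powr (a - b)) * r powr b" by (simp add: powr_diff)
    also have "\<dots> < c * r powr b" using r C by (intro mult_strict_right_mono) (simp_all add: field_simps)
    finally show False by simp
  qed
  then show ?thesis unfolding lower_index_def upper_index_def
    by (intro Sup_least Inf_greatest) auto
qed

lemma horder_lower_index:
  assumes "lower_index g = ereal m" "0 < m"
  shows "real (horder g) = real_of_int \<lceil>m\<rceil> - 1"
proof -
  have "1 \<le> \<lceil>m\<rceil>" using assms(2) by (simp add: le_ceiling_iff)
  then show ?thesis unfolding horder_def assms(1) by simp
qed

lemma le_horder:
  assumes "lower_index g = ereal m" "0 < m" "real j < m"
  shows "j \<le> horder g"
proof -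
  have "int j < \<lceil>m\<rceil>" using assms(3) by (simp add: less_ceiling_iff)
  then show ?thesis using horder_lower_index[OF assms(1,2)] by linarith
qed

lemma finite_lower_index:
  assumes pos: "\<And>r. 0 < r \<Longrightarrow> r \<le> 1 \<Longrightarrow> 0 < g r"
    and I: "index_interval g \<subseteq> {0<..} - \<int>" and M: "upper_index g = ereal M"
  obtains m where "lower_index g = ereal m" "0 < m" "m \<le> M" "M < real_of_int \<lceil>m\<rceil>"
proof -
  have le: "lower_index g \<le> ereal M"
    unfolding M[symmetric] by (rule lower_index_le_upper_index) (rule pos)
  have "lower_index g \<noteq> -\<infinity>"
  proof
    assume "lower_index g = -\<infinity>"
    then have "min M 0 - 1 \<in> index_interval g" unfolding index_interval_def M by auto
    then show False using I by auto
  qed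
  with le obtain m where m: "lower_index g = ereal m" by (cases "lower_index g") auto
  have mM: "m \<le> M" using le m by simp
  have "m \<in> index_interval g" unfolding index_interval_def m M using mM by simp
  then have m0: "0 < m" using I by auto
  have "M < real_of_int \<lceil>m\<rceil>"
  proof (rule ccontr)
    assume "\<not> M < real_of_int \<lceil>m\<rceil>"
    then have "real_of_int \<lceil>m\<rceil> \<in> index_interval g"
      unfolding index_interval_def m M using le_of_int_ceiling[of m] by auto
    then show False using I by auto
  qed
  then show ?thesis using that m m0 mM by blast
qed

lemma exists_exponents:
  assumes pos: "\<And>r. 0 < r \<Longrightarrow> r \<le> 1 \<Longrightarrow> 0 < \<phi> r" and one: "\<phi> 1 = 1"
    and lim: "(\<phi> \<longlongrightarrow> 0) (at_right 0)" and I: "index_interval \<phi> \<subseteq> {0<..} - \<int>"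
    and Mm: "upper_index \<phi> < lower_index \<psi>" and fin: "lower_index \<psi> \<noteq> \<infinity>"
  obtains \<beta> \<alpha> where "almost_decreasing (\<lambda>r. \<phi> r / r powr \<beta>)"
    "real (horder \<phi>) < \<beta>" "\<beta> \<le> real (horder \<phi>) + 1"
    "almost_increasing (\<lambda>r. \<psi> r / r powr \<alpha>)" "\<beta> < \<alpha>" "real (horder \<psi>) < \<alpha>"
    "horder \<phi> \<le> horder \<psi>"
proof -
  obtain M where M: "upper_index \<phi> = ereal M"
    using upper_index_neq_minf[OF one lim] Mm by (cases "upper_index \<phi>") auto
  obtain m1 where m1: "lower_index \<phi> = ereal m1" "0 < m1" "m1 \<le> M" "M < real_of_int \<lceil>m1\<rceil>"
    by (rule finite_lower_index[where g=\<phi>, OF pos I M])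
  obtain m2 where m2: "lower_index \<psi> = ereal m2" using fin Mm by (cases "lower_index \<psi>") auto
  define k where "k = horder \<phi>"
  define K where "K = horder \<psi>"
  have Mm2: "M < m2" using Mm M m2 by simp
  have k: "real k = real_of_int \<lceil>m1\<rceil> - 1" unfolding k_def by (rule horder_lower_index[OF m1(1,2)])
  then have km1: "real k < m1" using ceiling_correct[of m1] by linarith
  have K: "real K < m2"
    unfolding K_def using horder_lower_index[OF m2] ceiling_correct[of m2] m1 Mm2 by simp
  have "upper_index \<phi> < ereal (min (real k + 1) m2)" using M m1(4) k Mm2 by simp
  then obtain \<beta> where \<beta>0: "almost_decreasing (\<lambda>r. \<phi> r / r powr \<beta>)"
      "ereal \<beta> < ereal (min (real k + 1) m2)"
    unfolding upper_index_def Inf_less_iff by blast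
  then have \<beta>: "\<beta> < real k + 1" "\<beta> < m2" by auto
  have "ereal M \<le> ereal \<beta>" unfolding M[symmetric] upper_index_def using \<beta>0(1) by (auto intro: Inf_lower)
  then have k\<beta>: "real k < \<beta>" using km1 m1(3) by simp
  have "ereal (max \<beta> (real K)) < lower_index \<psi>" using m2 \<beta>(2) K by simp
  then obtain \<alpha> where \<alpha>: "almost_increasing (\<lambda>r. \<psi> r / r powr \<alpha>)" "max \<beta> (real K) < \<alpha>"
    unfolding lower_index_def by (auto simp: less_Sup_iff)
  have "k \<le> K" unfolding K_def using le_horder[OF m2] km1 m1 Mm2 by simp
  show ?thesis
    by (rule that[OF \<beta>0(1) _ _ \<alpha>(1)]) (use \<beta> k\<beta> \<alpha>(2) \<open>k \<le> K\<close> in \<open>auto simp: k_def K_def\<close>)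
qed

lemma powr_diff_le_weight:
  fixes \<psi> :: "real \<Rightarrow> real" and r k :: real
  assumes C: "\<And>r. 0 < r \<Longrightarrow> r \<le> 1 \<Longrightarrow> r powr \<beta> \<le> C * \<psi> r" and r: "0 < r" "r \<le> 1"
  shows "r powr (\<beta> - k) \<le> C * (\<psi> r * r powr (- k))"
proof -
  have "r powr (\<beta> - k) = r powr \<beta> * r powr (- k)" by (simp add: powr_diff powr_minus divide_inverse)
  also have "\<dots> \<le> C * \<psi> r * r powr (- k)" using C[OF r] by (rule mult_right_mono) simp
  finally show ?thesis by (simp add: mult.assoc)
qed

lemma eventually_dominated_at_0:
  fixes g \<psi> :: "real \<Rightarrow> real"
  assumes c: "0 < c" "\<And>r. 0 < r \<Longrightarrow> r \<le> 1 \<Longrightarrow> c * g r \<le> r powr \<alpha>"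
    and C: "0 < C" "\<And>r. 0 < r \<Longrightarrow> r \<le> 1 \<Longrightarrow> r powr \<beta> \<le> C * \<psi> r"
    and \<beta>\<alpha>: "\<beta> < \<alpha>" and \<eta>: "0 < \<eta>"
  obtains r0 where "0 < r0" "r0 \<le> 1" "\<And>r. 0 < r \<Longrightarrow> r \<le> r0 \<Longrightarrow> g r \<le> \<eta> * \<psi> r"
proof -
  have "((\<lambda>t. t powr (\<alpha> - \<beta>)) \<longlongrightarrow> 0) (at_right 0)"
    using \<beta>\<alpha> by (intro tendsto_powr_at_right_0) simp
  moreover have q: "0 < \<eta> * c / C" using \<eta> c C by simp
  ultimately obtain r0 where r0: "0 < r0" "r0 \<le> 1" "r0 powr (\<alpha> - \<beta>) < \<eta> * c / C"
    using exists_pos_le_1_less by blast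
  have "g r \<le> \<eta> * \<psi> r" if r: "0 < r" "r \<le> r0" for r
  proof -
    have "c * g r \<le> r powr (\<alpha> - \<beta>) * r powr \<beta>"
      using c(2)[of r] r r0 by (simp add: powr_diff)
    also have "\<dots> \<le> (\<eta> * c / C) * (C * \<psi> r)"
      using r r0 \<beta>\<alpha> q C(2)[of r] powr_mono2[of "\<alpha> - \<beta>" r r0]
      by (intro mult_mono) auto
    also have "\<dots> = c * (\<eta> * \<psi> r)" using C(1) by simp
    finally show ?thesis using c(1) by simp
  qed
  with r0(1,2) show ?thesis by (rule that)
qed

section \<open>Directional derivatives and Landau's inequality\<close>

lemma has_real_derivative_partial_dir:
  fixes G :: "real^'n \<Rightarrow> real"
  assumes "\<And>y. (\<lambda>t. G (y + t *\<^sub>R i)) field_differentiable (at (0::real))"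
  shows "((\<lambda>t. G (x + t *\<^sub>R i)) has_real_derivative partial_dir i G (x + s *\<^sub>R i)) (at s)"
proof -
  define y where "y = x + s *\<^sub>R i"
  have "((\<lambda>t. G (y + t *\<^sub>R i)) has_real_derivative partial_dir i G y) (at 0)"
    unfolding partial_dir_def using assms[of y] DERIV_deriv_iff_field_differentiable by blast
  moreover have "(\<lambda>t. G (y + t *\<^sub>R i)) = (\<lambda>t. G (x + (t + s) *\<^sub>R i))"
    unfolding y_def by (rule ext) (simp add: scaleR_add_left algebra_simps)
  ultimately show ?thesis
    using DERIV_shift[of "\<lambda>t. G (x + t *\<^sub>R i)" _ 0 s] unfolding y_def by simp
qed

lemma increment_le_partial_dir:
  fixes G :: "real^'n \<Rightarrow> real"
  assumes diff: "\<And>y. (\<lambda>t. G (y + t *\<^sub>R i)) field_differentiable (at (0::real))"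
    and bnd: "\<And>y. \<bar>partial_dir i G y\<bar> \<le> L"
  shows "\<bar>G (y + c *\<^sub>R i) - G y\<bar> \<le> \<bar>c\<bar> * L"
  using field_differentiable_bound[of UNIV "\<lambda>t. G (y + t *\<^sub>R i)"
      "\<lambda>s. partial_dir i G (y + s *\<^sub>R i)" L c 0]
    has_real_derivative_partial_dir[OF diff] bnd
  by (auto simp: has_field_derivative_at_within mult.commute)

lemma increment_le_card_Basis:
  fixes G :: "real^'n \<Rightarrow> real"
  assumes diff: "\<And>i y. i \<in> Basis \<Longrightarrow> (\<lambda>t. G (y + t *\<^sub>R i)) field_differentiable (at (0::real))"
    and bnd: "\<And>i y. i \<in> Basis \<Longrightarrow> \<bar>partial_dir i G y\<bar> \<le> L"
  shows "\<bar>G (x + h) - G x\<bar> \<le> real (card (Basis :: (real^'n) set)) * norm h * L"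
proof -
  have L: "0 \<le> L" using bnd[of "SOME i. i \<in> Basis" 0] nonempty_Basis
    by (metis abs_ge_zero order_trans some_in_eq)
  have along_T: "\<bar>G (x + (\<Sum>i\<in>T. (h \<bullet> i) *\<^sub>R i)) - G x\<bar> \<le> (\<Sum>i\<in>T. \<bar>h \<bullet> i\<bar>) * L"
    if "finite T" "T \<subseteq> Basis" for T x
    using that
  proof (induction T arbitrary: x rule: finite_induct)
    case (insert a T)
    have "\<bar>G (x + (h \<bullet> a) *\<^sub>R a + (\<Sum>i\<in>T. (h \<bullet> i) *\<^sub>R i)) - G (x + (h \<bullet> a) *\<^sub>R a)\<bar>
          \<le> (\<Sum>i\<in>T. \<bar>h \<bullet> i\<bar>) * L" using insert by auto
    moreover have "\<bar>G (x + (h \<bullet> a) *\<^sub>R a) - G x\<bar> \<le> \<bar>h \<bullet> a\<bar> * L"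
      by (rule increment_le_partial_dir) (use diff bnd insert in auto)
    ultimately show ?case using insert by (simp add: add.assoc algebra_simps)
  qed simp
  have "\<bar>G (x + h) - G x\<bar> \<le> (\<Sum>i\<in>Basis. \<bar>h \<bullet> i\<bar>) * L"
    using along_T[of Basis x] by (simp add: euclidean_representation)
  also have "\<dots> \<le> (\<Sum>i\<in>(Basis::(real^'n) set). norm h) * L"
    by (intro mult_right_mono sum_mono L) (simp add: Basis_le_norm)
  finally show ?thesis by simp
qed

text \<open>Landau's trick: the mean value theorem on \<open>[0, t]\<close> bounds \<open>\<phi>'\<close> at some point by \<open>2A/t\<close>,
  and the oscillation of \<open>\<phi>'\<close> on \<open>[0, t]\<close> transports this bound to \<open>0\<close>.\<close>
lemma abs_deriv_0_le:
  fixes \<phi> \<phi>' :: "real \<Rightarrow> real"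
  assumes t: "0 < t" and d: "\<And>s. (\<phi> has_real_derivative \<phi>' s) (at s)"
    and A: "\<And>s. \<bar>\<phi> s\<bar> \<le> A" and osc: "\<And>s. 0 \<le> s \<Longrightarrow> s \<le> t \<Longrightarrow> \<bar>\<phi>' s - \<phi>' 0\<bar> \<le> B"
  shows "\<bar>\<phi>' 0\<bar> \<le> 2 * A / t + B"
proof -
  obtain z where z: "0 < z" "z < t" "\<phi> t - \<phi> 0 = (t - 0) * \<phi>' z"
    using MVT2[OF t, of \<phi> \<phi>'] d by blast
  have "t * \<bar>\<phi>' z\<bar> \<le> 2 * A" using A[of t] A[of 0] z t by (simp add: abs_mult)
  then have "\<bar>\<phi>' z\<bar> \<le> 2 * A / t" using t by (simp add: field_simps)
  then show ?thesis using osc[of z] z by linarith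
qed

lemma normD_Suc_le_oscillation:
  fixes f :: "real^'n \<Rightarrow> real"
  assumes f: "in_Cg g f" and j: "Suc j \<le> horder g" and t: "0 < t"
    and osc: "\<And>e js y s. e \<in> Basis \<Longrightarrow> js \<in> multi_idx j \<Longrightarrow> 0 \<le> s \<Longrightarrow> s \<le> t \<Longrightarrow>
      \<bar>dpart (e # js) f (y + s *\<^sub>R e) - dpart (e # js) f y\<bar> \<le> \<omega>"
  shows "normD (Suc j) f \<le> 2 * normD j f / t + \<omega>"
proof (rule normD_le)
  fix "is" :: "(real^'n) list" assume "is \<in> multi_idx (Suc j)"
  then obtain e js where e: "is = e # js" "e \<in> Basis" and js: "js \<in> multi_idx j"
    by (rule multi_idx_SucE)
  have diff: "\<And>y. (\<lambda>s. dpart js f (y + s *\<^sub>R e)) field_differentiable (at (0::real))"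
    by (rule in_Cg_differentiable[OF f]) (use e js j in \<open>auto simp: multi_idx_def\<close>)
  show "sup0 (dpart is f) \<le> 2 * normD j f / t + \<omega>"
  proof (rule sup0_le)
    fix y
    have "\<bar>partial_dir e (dpart js f) (y + 0 *\<^sub>R e)\<bar> \<le> 2 * normD j f / t + \<omega>"
      by (rule abs_deriv_0_le[OF t has_real_derivative_partial_dir[OF diff]])
        (use abs_dpart_le_normD[OF f js] j osc[OF e(2) js] e in auto)
    then show "\<bar>dpart is f y\<bar> \<le> 2 * normD j f / t + \<omega>" using e by simp
  qed
qed

lemma dpart_increment_le_powr:
  fixes f :: "real^'n \<Rightarrow> real"
  assumes f: "in_Cg g f" and pos: "\<And>r. 0 < r \<Longrightarrow> r \<le> 1 \<Longrightarrow> 0 < g r"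
    and c: "0 < c" "\<And>r. 0 < r \<Longrightarrow> r \<le> 1 \<Longrightarrow> c * g r \<le> r powr \<alpha>"
    and "is": "is \<in> multi_idx (horder g)" and h: "0 < norm h" "norm h \<le> 1"
  shows "\<bar>dpart is f (x + h) - dpart is f x\<bar>
           \<le> holder_semiD (horder g) g f * (norm h powr (\<alpha> - horder g) / c)"
proof -
  have "g (norm h) * norm h powr (- real (horder g))
        \<le> norm h powr \<alpha> / c * norm h powr (- real (horder g))"
    using c h by (intro mult_right_mono) (auto simp: field_simps)
  also have "\<dots> = norm h powr (\<alpha> - horder g) / c"
    by (simp add: powr_diff powr_minus divide_inverse)
  finally show ?thesis
    using dpart_increment_le_holder_semiD[OF f pos "is" h, of x] holder_semiD_nonneg[OF f pos]
    by (meson mult_left_mono order_trans)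
qed

lemma dpart_oscillation_le_holder:
  fixes f :: "real^'n \<Rightarrow> real"
  assumes f: "in_Cg g f" and pos: "\<And>r. 0 < r \<Longrightarrow> r \<le> 1 \<Longrightarrow> 0 < g r"
    and c: "0 < c" "\<And>r. 0 < r \<Longrightarrow> r \<le> 1 \<Longrightarrow> c * g r \<le> r powr \<alpha>"
    and \<alpha>: "real (horder g) \<le> \<alpha>" and "is": "is \<in> multi_idx (horder g)" and e: "e \<in> Basis"
    and s: "0 \<le> s" "s \<le> t" "t \<le> 1"
  shows "\<bar>dpart is f (y + s *\<^sub>R e) - dpart is f y\<bar> \<le> t powr (\<alpha> - horder g) / c * Cg_norm g f"
proof (cases "s = 0")
  case True
  then show ?thesis using Cg_norm_nonneg[OF f pos] c by simp
next
  case False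
  have "\<bar>dpart is f (y + s *\<^sub>R e) - dpart is f y\<bar>
        \<le> holder_semiD (horder g) g f * (s powr (\<alpha> - horder g) / c)"
    using dpart_increment_le_powr[OF f pos c "is", of "s *\<^sub>R e" y] e s False by simp
  also have "\<dots> \<le> Cg_norm g f * (t powr (\<alpha> - horder g) / c)"
    using holder_semiD_le_Cg_norm[OF f] holder_semiD_nonneg[OF f pos] s \<alpha> c
    by (intro mult_mono divide_right_mono powr_mono2) auto
  finally show ?thesis by (simp add: mult.commute)
qed

lemma dpart_oscillation_le_next:
  fixes f :: "real^'n \<Rightarrow> real"
  assumes f: "in_Cg g f" and pos: "\<And>r. 0 < r \<Longrightarrow> r \<le> 1 \<Longrightarrow> 0 < g r"
    and "is": "is \<in> multi_idx j" and j: "j < horder g" and e: "e \<in> Basis"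
  shows "\<bar>dpart is f (y + s *\<^sub>R e) - dpart is f y\<bar> \<le> \<bar>s\<bar> * Cg_norm g f"
proof -
  have "\<bar>dpart is f (y + s *\<^sub>R e) - dpart is f y\<bar> \<le> \<bar>s\<bar> * normD (Suc j) f"
  proof (rule increment_le_partial_dir)
    show "\<And>y. (\<lambda>t. dpart is f (y + t *\<^sub>R e)) field_differentiable (at 0)"
      by (rule in_Cg_differentiable[OF f]) (use "is" j e in \<open>auto simp: multi_idx_def\<close>)
    show "\<And>y. \<bar>partial_dir e (dpart is f) y\<bar> \<le> normD (Suc j) f"
      using abs_dpart_le_normD[OF f Cons_in_multi_idx[OF e "is"]] j by simp
  qed
  also have "\<dots> \<le> \<bar>s\<bar> * Cg_norm g f"
    using normD_le_Cg_norm[OF f pos, of "Suc j"] j by (intro mult_left_mono) auto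
  finally show ?thesis .
qed

text \<open>The oscillation of a derivative of order \<open>j + 1\<close> is controlled by the next derivative when
  \<open>j + 1 < horder g\<close> and by the Hoelder seminorm when \<open>j + 1 = horder g\<close>; the factor
  \<open>t + t powr (\<alpha> - horder g) / c\<close> covers both cases.\<close>
lemma normD_Suc_le_Cg_norm:
  fixes f :: "real^'n \<Rightarrow> real"
  assumes f: "in_Cg g f" and pos: "\<And>r. 0 < r \<Longrightarrow> r \<le> 1 \<Longrightarrow> 0 < g r"
    and c: "0 < c" "\<And>r. 0 < r \<Longrightarrow> r \<le> 1 \<Longrightarrow> c * g r \<le> r powr \<alpha>"
    and \<alpha>: "real (horder g) \<le> \<alpha>" and j: "Suc j \<le> horder g" and t: "0 < t" "t \<le> 1"
  shows "normD (Suc j) f \<le> 2 * normD j f / t + (t + t powr (\<alpha> - horder g) / c) * Cg_norm g f"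
proof (rule normD_Suc_le_oscillation[OF f j t(1)])
  fix e :: "real^'n" and js :: "(real^'n) list" and y :: "real^'n" and s :: real
  assume e: "e \<in> Basis" and js: "js \<in> multi_idx j" and s: "0 \<le> s" "s \<le> t"
  have ejs: "e # js \<in> multi_idx (Suc j)" by (rule Cons_in_multi_idx[OF e js])
  have "0 \<le> t * Cg_norm g f" "0 \<le> t powr (\<alpha> - horder g) / c * Cg_norm g f"
    using Cg_norm_nonneg[OF f pos] t c by simp_all
  moreover have "\<bar>dpart (e # js) f (y + s *\<^sub>R e) - dpart (e # js) f y\<bar>
      \<le> t * Cg_norm g f \<or>
    \<bar>dpart (e # js) f (y + s *\<^sub>R e) - dpart (e # js) f y\<bar>
      \<le> t powr (\<alpha> - horder g) / c * Cg_norm g f"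
  proof (cases "Suc j = horder g")
    case True
    have "\<bar>dpart (e # js) f (y + s *\<^sub>R e) - dpart (e # js) f y\<bar>
        \<le> t powr (\<alpha> - horder g) / c * Cg_norm g f"
      using dpart_oscillation_le_holder[OF f pos c \<alpha> ejs[unfolded True] e s t(2)] .
    then show ?thesis ..
  next
    case False
    then have "\<bar>dpart (e # js) f (y + s *\<^sub>R e) - dpart (e # js) f y\<bar> \<le> \<bar>s\<bar> * Cg_norm g f"
      using dpart_oscillation_le_next[OF f pos ejs _ e] j by simp
    also have "\<dots> \<le> t * Cg_norm g f"
      using s Cg_norm_nonneg[OF f pos] by (intro mult_right_mono) auto
    finally show ?thesis ..
  qed
  ultimately show "\<bar>dpart (e # js) f (y + s *\<^sub>R e) - dpart (e # js) f y\<bar>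
      \<le> (t + t powr (\<alpha> - horder g) / c) * Cg_norm g f"
    by (auto simp: distrib_right)
qed

section \<open>Interpolation\<close>

definition interpolable :: "(real \<Rightarrow> real) \<Rightarrow> ((real^'n \<Rightarrow> real) \<Rightarrow> real) \<Rightarrow> bool" where
  "interpolable g F \<longleftrightarrow>
     (\<forall>\<delta>>0. \<exists>C. \<forall>f. in_Cg g f \<longrightarrow> F f \<le> C * sup0 f + \<delta> * Cg_norm g f)"

lemma interpolableI:
  fixes F G :: "(real^'n \<Rightarrow> real) \<Rightarrow> real"
  assumes pos: "\<And>r. 0 < r \<Longrightarrow> r \<le> 1 \<Longrightarrow> 0 < g r" and G: "interpolable g G"
    and bound: "\<And>\<eta>. 0 < \<eta> \<Longrightarrow> \<exists>A B. 0 \<le> B \<and>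
      (\<forall>f. in_Cg g f \<longrightarrow> F f \<le> A * sup0 f + B * G f + \<eta> * Cg_norm g f)"
  shows "interpolable g F"
  unfolding interpolable_def
proof (intro allI impI)
  fix \<delta> :: real assume \<delta>: "0 < \<delta>"
  obtain A B where B: "0 \<le> B"
    and FG: "\<And>f. in_Cg g f \<Longrightarrow> F f \<le> A * sup0 f + B * G f + \<delta> / 2 * Cg_norm g f"
    using bound[of "\<delta> / 2"] \<delta> by auto
  define e where "e = \<delta> / (2 * (B + 1))"
  have e: "0 < e" "B * e + \<delta> / 2 \<le> \<delta>" unfolding e_def using \<delta> B by (auto simp: field_simps)
  obtain C where C: "\<And>f. in_Cg g f \<Longrightarrow> G f \<le> C * sup0 f + e * Cg_norm g f"
    using G e(1) unfolding interpolable_def by blast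
  have "F f \<le> (A + B * C) * sup0 f + \<delta> * Cg_norm g f" if f: "in_Cg g f" for f
  proof -
    have "F f \<le> A * sup0 f + B * G f + \<delta> / 2 * Cg_norm g f" by (rule FG[OF f])
    also have "\<dots> \<le> A * sup0 f + B * (C * sup0 f + e * Cg_norm g f) + \<delta> / 2 * Cg_norm g f"
      using mult_left_mono[OF C[OF f] B] by linarith
    also have "\<dots> = (A + B * C) * sup0 f + (B * e + \<delta> / 2) * Cg_norm g f"
      by (simp add: algebra_simps)
    also have "\<dots> \<le> (A + B * C) * sup0 f + \<delta> * Cg_norm g f"
      using e(2) Cg_norm_nonneg[OF f pos] by (intro add_left_mono mult_right_mono)
    finally show ?thesis .
  qed
  then show "\<exists>C. \<forall>f. in_Cg g f \<longrightarrow> F f \<le> C * sup0 f + \<delta> * Cg_norm g f" by blast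
qed

lemma interpolable_sup0:
  assumes pos: "\<And>r. 0 < r \<Longrightarrow> r \<le> 1 \<Longrightarrow> 0 < g r"
  shows "interpolable g (sup0 :: (real^'n \<Rightarrow> real) \<Rightarrow> real)"
proof -
  have "sup0 f \<le> 1 * sup0 f + \<delta> * Cg_norm g f" if "0 < \<delta>" "in_Cg g f"
    for \<delta> and f :: "real^'n \<Rightarrow> real"
    using Cg_norm_nonneg[OF that(2) pos] that(1) by simp
  then show ?thesis unfolding interpolable_def by blast
qed

lemma interpolable_add:
  assumes "interpolable g F" "interpolable g G"
  shows "interpolable g (\<lambda>f. F f + G f)"
  unfolding interpolable_def
proof (intro allI impI)
  fix \<delta> :: real assume "0 < \<delta>"
  then obtain C D where
    "\<And>f. in_Cg g f \<Longrightarrow> F f \<le> C * sup0 f + \<delta> / 2 * Cg_norm g f"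
    "\<And>f. in_Cg g f \<Longrightarrow> G f \<le> D * sup0 f + \<delta> / 2 * Cg_norm g f"
    using assms unfolding interpolable_def by (meson half_gt_zero)
  then have "\<And>f. in_Cg g f \<Longrightarrow> F f + G f \<le> (C + D) * sup0 f + \<delta> * Cg_norm g f"
    by (fastforce simp: algebra_simps)
  then show "\<exists>C. \<forall>f. in_Cg g f \<longrightarrow> F f + G f \<le> C * sup0 f + \<delta> * Cg_norm g f" by blast
qed

lemma interpolable_sum_atMost:
  fixes k :: nat
  assumes "\<And>j. j \<le> k \<Longrightarrow> interpolable g (F j)"
  shows "interpolable g (\<lambda>f. \<Sum>j\<le>k. F j f)"
  using assms
proof (induction k)
  case (Suc k)
  then show ?case unfolding sum.atMost_Suc by (intro interpolable_add) auto
qed simp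

lemma interpolable_pos_constant:
  fixes F :: "(real^'n \<Rightarrow> real) \<Rightarrow> real"
  assumes "interpolable g F" "0 < \<epsilon>"
  shows "\<exists>C>0. \<forall>f. in_Cg g f \<longrightarrow> F f \<le> C * sup0 f + \<epsilon> * Cg_norm g f"
proof -
  obtain C where C: "\<And>f. in_Cg g f \<Longrightarrow> F f \<le> C * sup0 f + \<epsilon> * Cg_norm g f"
    using assms unfolding interpolable_def by blast
  have "C * sup0 f \<le> max C 1 * sup0 f" if "in_Cg g f" for f :: "real^'n \<Rightarrow> real"
    using sup0_nonneg[OF that] by (intro mult_right_mono) auto
  then show ?thesis using C by (intro exI[of _ "max C 1"]) force
qed

lemma interpolable_normD:
  assumes pos: "\<And>r. 0 < r \<Longrightarrow> r \<le> 1 \<Longrightarrow> 0 < g r"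
    and c: "0 < c" "\<And>r. 0 < r \<Longrightarrow> r \<le> 1 \<Longrightarrow> c * g r \<le> r powr \<alpha>"
    and \<alpha>: "real (horder g) < \<alpha>" and j: "j \<le> horder g"
  shows "interpolable g (normD j :: (real^'n \<Rightarrow> real) \<Rightarrow> real)"
  using j
proof (induction j)
  case 0
  show ?case unfolding normD_0 by (rule interpolable_sup0[where g=g, OF pos])
next
  case (Suc j)
  have IH: "interpolable g (normD j :: (real^'n \<Rightarrow> real) \<Rightarrow> real)" using Suc by simp
  show ?case
  proof (rule interpolableI[where g=g, OF pos IH])
    fix \<eta> :: real assume "0 < \<eta>"
    moreover have "((\<lambda>t. t + t powr (\<alpha> - horder g) / c) \<longlongrightarrow> 0) (at_right 0)"
      using \<alpha> by (intro tendsto_add_zero tendsto_divide_zero tendsto_ident_at tendsto_powr_at_right_0) simp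
    ultimately obtain t where t: "0 < t" "t \<le> 1" "t + t powr (\<alpha> - horder g) / c < \<eta>"
      using exists_pos_le_1_less by blast
    have "\<forall>f :: real^'n \<Rightarrow> real. in_Cg g f \<longrightarrow>
      normD (Suc j) f \<le> 0 * sup0 f + 2 / t * normD j f + \<eta> * Cg_norm g f"
    proof (intro allI impI)
      fix f :: "real^'n \<Rightarrow> real" assume f: "in_Cg g f"
      have "(t + t powr (\<alpha> - horder g) / c) * Cg_norm g f \<le> \<eta> * Cg_norm g f"
        using t Cg_norm_nonneg[OF f pos] by (intro mult_right_mono) auto
      then show "normD (Suc j) f \<le> 0 * sup0 f + 2 / t * normD j f + \<eta> * Cg_norm g f"
        using normD_Suc_le_Cg_norm[OF f pos c _ Suc.prems t(1,2)] \<alpha> by simp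
    qed
    moreover have "0 \<le> 2 / t" using t by simp
    ultimately show "\<exists>A B. 0 \<le> B \<and> (\<forall>f :: real^'n \<Rightarrow> real. in_Cg g f \<longrightarrow>
      normD (Suc j) f \<le> A * sup0 f + B * normD j f + \<eta> * Cg_norm g f)"
      by blast
  qed
qed

lemma holder_semiD_le_normD_Suc:
  fixes f :: "real^'n \<Rightarrow> real"
  assumes f: "in_Cg g f" and k: "k < horder g"
    and pos1: "\<And>r. 0 < r \<Longrightarrow> r \<le> 1 \<Longrightarrow> 0 < \<psi> r"
    and C: "0 \<le> C" "\<And>r. 0 < r \<Longrightarrow> r \<le> 1 \<Longrightarrow> r powr \<beta> \<le> C * \<psi> r"
    and \<beta>: "\<beta> \<le> real k + 1"
  shows "holder_semiD k \<psi> f \<le> real (card (Basis :: (real^'n) set)) * C * normD (Suc k) f"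
proof (rule holder_semiD_le[where g=\<psi>, OF pos1])
  fix "is" :: "(real^'n) list" and x h :: "real^'n"
  assume "is": "is \<in> multi_idx k" and h: "0 < norm h" "norm h \<le> 1"
  define d where "d = real (card (Basis :: (real^'n) set))"
  have N: "0 \<le> normD (Suc k) f" using normD_nonneg[OF f] k by simp
  have "\<bar>dpart is f (x + h) - dpart is f x\<bar> \<le> d * norm h * normD (Suc k) f"
    unfolding d_def
  proof (rule increment_le_card_Basis)
    show "\<And>i y. i \<in> Basis \<Longrightarrow> (\<lambda>t. dpart is f (y + t *\<^sub>R i)) field_differentiable (at 0)"
      by (rule in_Cg_differentiable[OF f]) (use "is" k in \<open>auto simp: multi_idx_def\<close>)
    show "\<And>i y. i \<in> Basis \<Longrightarrow> \<bar>partial_dir i (dpart is f) y\<bar> \<le> normD (Suc k) f"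
      using abs_dpart_le_normD[OF f Cons_in_multi_idx[OF _ "is"]] k by simp
  qed
  also have "norm h \<le> C * (\<psi> (norm h) * norm h powr (- real k))"
  proof -
    have "norm h = norm h powr 1" using h by simp
    also have "\<dots> \<le> norm h powr (\<beta> - real k)" using h \<beta> by (intro powr_mono') auto
    also have "\<dots> \<le> C * (\<psi> (norm h) * norm h powr (- real k))" by (rule powr_diff_le_weight[OF C(2) h])
    finally show ?thesis .
  qed
  then have "d * norm h * normD (Suc k) f \<le> d * (C * (\<psi> (norm h) * norm h powr (- real k))) * normD (Suc k) f"
    using N unfolding d_def by (intro mult_right_mono mult_left_mono) auto
  finally show "\<bar>dpart is f (x + h) - dpart is f x\<bar> \<le> d * C * normD (Suc k) f * (\<psi> (norm h) * norm h powr (- real k))"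
    by (simp add: ac_simps)
qed

text \<open>Increments shorter than \<open>r0\<close> are estimated through the Hoelder seminorm of order \<open>g\<close>,
  longer ones crudely by twice the sup norm of the derivative.\<close>
lemma holder_semiD_le_split:
  fixes f :: "real^'n \<Rightarrow> real"
  assumes f: "in_Cg g f" and pos: "\<And>r. 0 < r \<Longrightarrow> r \<le> 1 \<Longrightarrow> 0 < g r"
    and pos1: "\<And>r. 0 < r \<Longrightarrow> r \<le> 1 \<Longrightarrow> 0 < \<psi> r"
    and C: "0 \<le> C" "\<And>r. 0 < r \<Longrightarrow> r \<le> 1 \<Longrightarrow> r powr \<beta> \<le> C * \<psi> r"
    and \<beta>: "real (horder g) \<le> \<beta>"
    and r0: "0 < r0" and \<eta>: "0 \<le> \<eta>"
    and small: "\<And>r. 0 < r \<Longrightarrow> r \<le> r0 \<Longrightarrow> g r \<le> \<eta> * \<psi> r"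
  shows "holder_semiD (horder g) \<psi> f
           \<le> \<eta> * holder_semiD (horder g) g f + 2 * C / r0 powr (\<beta> - horder g) * normD (horder g) f"
proof (rule holder_semiD_le[where g=\<psi>, OF pos1])
  fix "is" :: "(real^'n) list" and x h :: "real^'n"
  assume "is": "is \<in> multi_idx (horder g)" and h: "0 < norm h" "norm h \<le> 1"
  define K where "K = horder g"
  define r where "r = norm h"
  define D where "D = \<psi> r * r powr (- real K)"
  define S where "S = holder_semiD K g f"
  define N where "N = normD K f"
  have r: "0 < r" "r \<le> 1" using h unfolding r_def by auto
  have D: "0 < D" unfolding D_def using pos1[OF r] r by simp
  have S: "0 \<le> S" unfolding S_def K_def by (rule holder_semiD_nonneg[OF f pos])
  have N: "0 \<le> N" unfolding N_def K_def using normD_nonneg[OF f] by simp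
  have B: "0 \<le> 2 * C / r0 powr (\<beta> - K) * N * D" using C(1) N D by simp
  have "\<bar>dpart is f (x + h) - dpart is f x\<bar> \<le> (\<eta> * S + 2 * C / r0 powr (\<beta> - K) * N) * D"
  proof (cases "r \<le> r0")
    case True
    have "\<bar>dpart is f (x + h) - dpart is f x\<bar> \<le> S * (g r * r powr (- real K))"
      using dpart_increment_le_holder_semiD[OF f pos "is" h, of x] unfolding S_def r_def K_def .
    also have "\<dots> \<le> S * (\<eta> * \<psi> r * r powr (- real K))"
      using small[OF r(1) True] S by (intro mult_left_mono mult_right_mono) auto
    also have "\<dots> = \<eta> * S * D" unfolding D_def by (simp add: ac_simps)
    finally show ?thesis using B unfolding distrib_right by linarith
  next
    case False
    have "r0 powr (\<beta> - K) \<le> r powr (\<beta> - K)"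
      using False r0 \<beta> unfolding K_def by (intro powr_mono2) auto
    also have "\<dots> \<le> C * D" unfolding D_def by (rule powr_diff_le_weight[OF C(2) r])
    finally have "1 \<le> C * D / r0 powr (\<beta> - K)" using r0 by simp
    then have "2 * N * 1 \<le> 2 * N * (C * D / r0 powr (\<beta> - K))" using N by (intro mult_left_mono) auto
    then have "2 * N \<le> 2 * C / r0 powr (\<beta> - K) * N * D" by (simp add: ac_simps)
    moreover have "\<bar>dpart is f (x + h) - dpart is f x\<bar> \<le> 2 * N"
      unfolding N_def K_def using dpart_increment_le_normD[OF f "is"] by simp
    moreover have "0 \<le> \<eta> * S * D" using S \<eta> D by simp
    ultimately show ?thesis unfolding distrib_right by linarith
  qed
  then show "\<bar>dpart is f (x + h) - dpart is f x\<bar>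
        \<le> (\<eta> * holder_semiD (horder g) g f + 2 * C / r0 powr (\<beta> - horder g) * normD (horder g) f)
           * (\<psi> (norm h) * norm h powr (- real (horder g)))"
    unfolding D_def S_def N_def K_def r_def .
qed

lemma interpolable_holder_semiD_top:
  assumes pos: "\<And>r. 0 < r \<Longrightarrow> r \<le> 1 \<Longrightarrow> 0 < g r"
    and pos1: "\<And>r. 0 < r \<Longrightarrow> r \<le> 1 \<Longrightarrow> 0 < \<psi> r"
    and c: "0 < c" "\<And>r. 0 < r \<Longrightarrow> r \<le> 1 \<Longrightarrow> c * g r \<le> r powr \<alpha>"
    and C: "0 < C" "\<And>r. 0 < r \<Longrightarrow> r \<le> 1 \<Longrightarrow> r powr \<beta> \<le> C * \<psi> r"
    and \<beta>: "real (horder g) \<le> \<beta>" and \<alpha>: "\<beta> < \<alpha>" "real (horder g) < \<alpha>"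
  shows "interpolable g (holder_semiD (horder g) \<psi> :: (real^'n \<Rightarrow> real) \<Rightarrow> real)"
proof -
  define K where "K = horder g"
  have G: "interpolable g (normD K :: (real^'n \<Rightarrow> real) \<Rightarrow> real)"
    unfolding K_def by (rule interpolable_normD[where g=g, OF pos c \<alpha>(2) order_refl])
  have "interpolable g (holder_semiD K \<psi> :: (real^'n \<Rightarrow> real) \<Rightarrow> real)"
  proof (rule interpolableI[where g=g, OF pos G])
    fix \<eta> :: real assume \<eta>: "0 < \<eta>"
    obtain r0 where r0: "0 < r0" "r0 \<le> 1" "\<And>r. 0 < r \<Longrightarrow> r \<le> r0 \<Longrightarrow> g r \<le> \<eta> * \<psi> r"
      using eventually_dominated_at_0[where g=g and \<psi>=\<psi>, OF c C \<alpha>(1) \<eta>] by blast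
    have "\<forall>f :: real^'n \<Rightarrow> real. in_Cg g f \<longrightarrow>
      holder_semiD K \<psi> f \<le> 0 * sup0 f + 2 * C / r0 powr (\<beta> - K) * normD K f + \<eta> * Cg_norm g f"
    proof (intro allI impI)
      fix f :: "real^'n \<Rightarrow> real" assume f: "in_Cg g f"
      have "holder_semiD K \<psi> f \<le> \<eta> * holder_semiD K g f + 2 * C / r0 powr (\<beta> - K) * normD K f"
        unfolding K_def
        by (rule holder_semiD_le_split[where \<psi>=\<psi>, OF f pos pos1 _ C(2) \<beta> r0(1) _ r0(3)])
          (use C(1) \<eta> in auto)
      moreover have "\<eta> * holder_semiD K g f \<le> \<eta> * Cg_norm g f"
        unfolding K_def using holder_semiD_le_Cg_norm[OF f] \<eta> by simp
      ultimately show "holder_semiD K \<psi> f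
          \<le> 0 * sup0 f + 2 * C / r0 powr (\<beta> - K) * normD K f + \<eta> * Cg_norm g f"
        by linarith
    qed
    moreover have "0 \<le> 2 * C / r0 powr (\<beta> - K)" using C(1) by simp
    ultimately show "\<exists>A B. 0 \<le> B \<and> (\<forall>f :: real^'n \<Rightarrow> real. in_Cg g f \<longrightarrow>
      holder_semiD K \<psi> f \<le> A * sup0 f + B * normD K f + \<eta> * Cg_norm g f)"
      by blast
  qed
  then show ?thesis unfolding K_def .
qed

lemma interpolable_holder_semiD_below:
  assumes pos: "\<And>r. 0 < r \<Longrightarrow> r \<le> 1 \<Longrightarrow> 0 < g r"
    and pos1: "\<And>r. 0 < r \<Longrightarrow> r \<le> 1 \<Longrightarrow> 0 < \<psi> r"
    and c: "0 < c" "\<And>r. 0 < r \<Longrightarrow> r \<le> 1 \<Longrightarrow> c * g r \<le> r powr \<alpha>"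
    and C: "0 \<le> C" "\<And>r. 0 < r \<Longrightarrow> r \<le> 1 \<Longrightarrow> r powr \<beta> \<le> C * \<psi> r"
    and k: "k < horder g" and \<beta>: "\<beta> \<le> real k + 1" and \<alpha>: "real (horder g) < \<alpha>"
  shows "interpolable g (holder_semiD k \<psi> :: (real^'n \<Rightarrow> real) \<Rightarrow> real)"
proof -
  have G: "interpolable g (normD (Suc k) :: (real^'n \<Rightarrow> real) \<Rightarrow> real)"
    using interpolable_normD[where g=g, OF pos c \<alpha> Suc_leI[OF k]] .
  show ?thesis
  proof (rule interpolableI[where g=g, OF pos G])
    fix \<eta> :: real assume \<eta>: "0 < \<eta>"
    have "\<forall>f :: real^'n \<Rightarrow> real. in_Cg g f \<longrightarrow> holder_semiD k \<psi> f
      \<le> 0 * sup0 f + card (Basis :: (real^'n) set) * C * normD (Suc k) f + \<eta> * Cg_norm g f"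
    proof (intro allI impI)
      fix f :: "real^'n \<Rightarrow> real" assume f: "in_Cg g f"
      have "holder_semiD k \<psi> f \<le> card (Basis :: (real^'n) set) * C * normD (Suc k) f"
        by (rule holder_semiD_le_normD_Suc[where \<psi>=\<psi>, OF f k pos1 C \<beta>])
      moreover have "0 \<le> \<eta> * Cg_norm g f" using \<eta> Cg_norm_nonneg[OF f pos] by simp
      ultimately show "holder_semiD k \<psi> f
          \<le> 0 * sup0 f + card (Basis :: (real^'n) set) * C * normD (Suc k) f + \<eta> * Cg_norm g f"
        by linarith
    qed
    moreover have "0 \<le> card (Basis :: (real^'n) set) * C" using C(1) by simp
    ultimately show "\<exists>A B. 0 \<le> B \<and> (\<forall>f :: real^'n \<Rightarrow> real. in_Cg g f \<longrightarrow>
      holder_semiD k \<psi> f \<le> A * sup0 f + B * normD (Suc k) f + \<eta> * Cg_norm g f)"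
      by blast
  qed
qed

lemma interpolable_Cg_norm:
  assumes pos\<phi>: "\<And>r. 0 < r \<Longrightarrow> r \<le> 1 \<Longrightarrow> 0 < \<phi> r" and pos\<psi>: "\<And>r. 0 < r \<Longrightarrow> r \<le> 1 \<Longrightarrow> 0 < \<psi> r"
    and one\<phi>: "\<phi> 1 = 1" and one\<psi>: "\<psi> 1 = 1"
    and \<beta>: "almost_decreasing (\<lambda>r. \<phi> r / r powr \<beta>)" "real (horder \<phi>) < \<beta>" "\<beta> \<le> real (horder \<phi>) + 1"
    and \<alpha>: "almost_increasing (\<lambda>r. \<psi> r / r powr \<alpha>)" "\<beta> < \<alpha>" "real (horder \<psi>) < \<alpha>"
    and k: "horder \<phi> \<le> horder \<psi>"
  shows "interpolable \<psi> (Cg_norm \<phi> :: (real^'n \<Rightarrow> real) \<Rightarrow> real)"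
proof -
  obtain C where C: "1 \<le> C" "\<And>r. 0 < r \<Longrightarrow> r \<le> 1 \<Longrightarrow> r powr \<beta> \<le> C * \<phi> r"
    using power_le_of_almost_decreasing[OF \<beta>(1) one\<phi>] by blast
  obtain c where c: "0 < c" "\<And>r. 0 < r \<Longrightarrow> r \<le> 1 \<Longrightarrow> c * \<psi> r \<le> r powr \<alpha>"
    using le_power_of_almost_increasing[OF \<alpha>(1) one\<psi>] by blast
  have "interpolable \<psi> (\<lambda>f :: real^'n \<Rightarrow> real. \<Sum>j\<le>horder \<phi>. normD j f)"
    using k by (intro interpolable_sum_atMost interpolable_normD[where g=\<psi>, OF pos\<psi> c \<alpha>(3)]) auto
  moreover have "interpolable \<psi> (holder_semiD (horder \<phi>) \<phi> :: (real^'n \<Rightarrow> real) \<Rightarrow> real)"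
  proof (cases "horder \<phi> = horder \<psi>")
    case True
    show ?thesis unfolding True
      by (rule interpolable_holder_semiD_top[where g=\<psi> and \<psi>=\<phi>, OF pos\<psi> pos\<phi> c _ C(2)])
        (use C(1) \<beta> \<alpha> True in auto)
  next
    case False
    show ?thesis
      by (rule interpolable_holder_semiD_below[where g=\<psi> and \<psi>=\<phi>, OF pos\<psi> pos\<phi> c _ C(2)])
        (use C(1) \<beta> \<alpha> k False in auto)
  qed
  ultimately show ?thesis unfolding Cg_norm_def[abs_def] by (rule interpolable_add)
qed

section \<open>Functions of class C^g when m_g is infinite\<close>

lemma constant_if_increment_le_square:
  fixes f :: "real^'n \<Rightarrow> real"
  assumes incr: "\<And>x h. norm h \<le> 1 \<Longrightarrow> \<bar>f (x + h) - f x\<bar> \<le> K * norm h ^ 2"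
  shows "f y = f x"
proof (rule ccontr)
  assume "f y \<noteq> f x"
  then have D: "0 < \<bar>f y - f x\<bar>" by simp
  define d where "d = norm (y - x)"
  obtain n :: nat where n: "max 1 (max d (K * d^2 / \<bar>f y - f x\<bar>)) < real n"
    using reals_Archimedean2 by blast
  then have n0: "0 < real n" by linarith
  define p where "p i = x + (real i / real n) *\<^sub>R (y - x)" for i
  define v where "v = (1 / real n) *\<^sub>R (y - x)"
  have v: "norm v = d / real n" unfolding v_def d_def using n0 by simp
  have step: "\<bar>f (p (Suc i)) - f (p i)\<bar> \<le> K * (d / real n) ^ 2" for i
  proof -
    have "p (Suc i) = p i + v"
      unfolding p_def v_def using n0 by (simp add: add_divide_distrib scaleR_add_left algebra_simps)
    moreover have "d / real n \<le> 1" using n n0 by (simp add: field_simps)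
    ultimately show ?thesis using incr[of v "p i"] unfolding v by simp
  qed
  have "f y - f x = (\<Sum>i<n. f (p (Suc i)) - f (p i))"
    by (subst sum_lessThan_telescope) (use n0 in \<open>simp add: p_def\<close>)
  then have "\<bar>f y - f x\<bar> \<le> (\<Sum>i<n. \<bar>f (p (Suc i)) - f (p i)\<bar>)" by (simp add: sum_abs)
  also have "\<dots> \<le> (\<Sum>i<n. K * (d / real n) ^ 2)" by (intro sum_mono step)
  also have "\<dots> = K * d^2 / real n" using n0 by (simp add: power2_eq_square field_simps)
  finally have "\<bar>f y - f x\<bar> * real n \<le> K * d^2" using n0 by (simp add: field_simps)
  moreover have "K * d^2 < \<bar>f y - f x\<bar> * real n" using n D by (simp add: field_simps)
  ultimately show False by simp
qed

text \<open>For \<open>lower_index g = \<infinity>\<close> the junk value \<open>real_of_ereal \<infinity> = 0\<close> makes \<open>horder g = 0\<close>,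
  while \<open>g\<close> decays faster than \<open>r\<^sup>2\<close>: only constants belong to \<open>C\<^sup>g\<close>.\<close>
lemma in_Cg_constant_if_lower_index_infinite:
  fixes f :: "real^'n \<Rightarrow> real"
  assumes pos: "\<And>r. 0 < r \<Longrightarrow> r \<le> 1 \<Longrightarrow> 0 < g r" and one: "g 1 = 1"
    and inf: "lower_index g = \<infinity>" and f: "in_Cg g f"
  shows "f = (\<lambda>_. f 0)"
proof -
  have K: "horder g = 0" unfolding horder_def inf by simp
  have "ereal 2 < Sup (ereal ` {\<alpha>. almost_increasing (\<lambda>r. g r / r powr \<alpha>)})"
    using inf by (simp add: lower_index_def)
  then obtain \<alpha> where \<alpha>: "almost_increasing (\<lambda>r. g r / r powr \<alpha>)" "2 < \<alpha>"
    by (auto simp: less_Sup_iff)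
  obtain c where c: "0 < c" "\<And>r. 0 < r \<Longrightarrow> r \<le> 1 \<Longrightarrow> c * g r \<le> r powr \<alpha>"
    using le_power_of_almost_increasing[OF \<alpha>(1) one] by blast
  define S where "S = holder_semiD 0 g f"
  have S: "0 \<le> S" unfolding S_def using holder_semiD_nonneg[OF f pos] K by simp
  have "\<bar>f (x + h) - f x\<bar> \<le> S / c * norm h ^ 2" if h: "norm h \<le> 1" for x h
  proof (cases "h = 0")
    case False
    have "\<bar>f (x + h) - f x\<bar> \<le> S * (norm h powr \<alpha> / c)"
      using dpart_increment_le_powr[OF f pos c, of "[]" h x] K h False by (simp add: multi_idx_0 S_def)
    also have "\<dots> \<le> S * (norm h powr 2 / c)"
      using S c h \<alpha>(2) by (intro mult_left_mono divide_right_mono powr_mono') auto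
    finally show ?thesis using False by (simp add: powr_numeral)
  qed simp
  then show ?thesis using constant_if_increment_le_square by blast
qed

lemma Cg_norm_eq_sup0_if_lower_index_infinite:
  fixes f :: "real^'n \<Rightarrow> real"
  assumes pos: "\<And>r. 0 < r \<Longrightarrow> r \<le> 1 \<Longrightarrow> 0 < g r" and one: "g 1 = 1"
    and inf: "lower_index g = \<infinity>" and f: "in_Cg g f"
  shows "Cg_norm h f = sup0 f"
proof -
  have const: "f = (\<lambda>_. f 0)"
    by (rule in_Cg_constant_if_lower_index_infinite[where g=g, OF pos one inf f])
  have "Cg_norm h f = \<bar>f 0\<bar>" "sup0 f = \<bar>f 0\<bar>"
    by (subst const, rule Cg_norm_const) (subst const, rule sup0_const)
  then show ?thesis by simp
qed

theorem proposition2p6: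
  fixes \<psi>1 \<psi>2 :: "real \<Rightarrow> real" and \<epsilon> :: real
  assumes pos1: "\<forall>r\<in>{0<..1}. 0 < \<psi>1 r" and pos2: "\<forall>r\<in>{0<..1}. 0 < \<psi>2 r"
    and one1: "\<psi>1 1 = 1" and one2: "\<psi>2 1 = 1"
    and lim1: "(\<psi>1 \<longlongrightarrow> 0) (at_right 0)" and lim2: "(\<psi>2 \<longlongrightarrow> 0) (at_right 0)"
    and I1: "index_interval \<psi>1 \<subseteq> {0<..<1} \<union> {1<..<2} \<union> {2<..<3}"
    and I2: "index_interval \<psi>2 \<subseteq> {0<..<1} \<union> {1<..<2} \<union> {2<..<3}"
    and Mm: "upper_index \<psi>1 < lower_index \<psi>2"
    and eps: "0 < \<epsilon>" "\<epsilon> < 1"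
  shows "\<exists>C>0. \<forall>f :: real^'n \<Rightarrow> real. in_Cg \<psi>2 f \<longrightarrow>
           Cg_norm \<psi>1 f \<le> C * sup0 f + \<epsilon> * Cg_norm \<psi>2 f"
proof -
  have p1: "\<And>r. 0 < r \<Longrightarrow> r \<le> 1 \<Longrightarrow> 0 < \<psi>1 r" and p2: "\<And>r. 0 < r \<Longrightarrow> r \<le> 1 \<Longrightarrow> 0 < \<psi>2 r"
    using pos1 pos2 by auto
  show ?thesis
  proof (cases "lower_index \<psi>2 = \<infinity>")
    case True
    have "Cg_norm \<psi>1 f \<le> 1 * sup0 f + \<epsilon> * Cg_norm \<psi>2 f" if f: "in_Cg \<psi>2 f" for f :: "real^'n \<Rightarrow> real"
      using Cg_norm_eq_sup0_if_lower_index_infinite[where g=\<psi>2, OF p2 one2 True f] sup0_nonneg[OF f] eps(1)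
      by simp
    then show ?thesis by (intro exI[of _ 1]) auto
  next
    case False
    have "{0<..<1} \<union> {1<..<2} \<union> {2<..<3} \<subseteq> {0<..} - (\<int> :: real set)"
      by (auto elim!: Ints_cases)
    with I1 have I1': "index_interval \<psi>1 \<subseteq> {0<..} - \<int>" by blast
    obtain \<beta> \<alpha> where "almost_decreasing (\<lambda>r. \<psi>1 r / r powr \<beta>)"
      "real (horder \<psi>1) < \<beta>" "\<beta> \<le> real (horder \<psi>1) + 1"
      "almost_increasing (\<lambda>r. \<psi>2 r / r powr \<alpha>)" "\<beta> < \<alpha>" "real (horder \<psi>2) < \<alpha>"
      "horder \<psi>1 \<le> horder \<psi>2"
      by (rule exists_exponents[where \<phi>=\<psi>1 and \<psi>=\<psi>2, OF p1 one1 lim1 I1' Mm False])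
    then have "interpolable \<psi>2 (Cg_norm \<psi>1 :: (real^'n \<Rightarrow> real) \<Rightarrow> real)"
      by (intro interpolable_Cg_norm[where \<phi>=\<psi>1 and \<psi>=\<psi>2, OF p1 p2 one1 one2])
    then show ?thesis using interpolable_pos_constant eps(1) by blast
  qed
qed

end
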